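(* Let $(X,Y)$ and $(\tilde X,\tilde Y)$ be random pairs on finite sets $\mathcal X\times\mathcal Y$ and suppose $D_{\chi^2}(P_{\tilde Y,\tilde X}\|P_{Y,X})\le\beta^2$. Then $P_{\tilde X}(x)=P_X(x)+O(\beta)$ for all $x\in\mathcal X$, and $P_{\tilde Y\mid\tilde X}(y\mid x)=P_{Y\mid X}(y\mid x)+O(\beta)$ for all $x\in\mathcal X$, $y\in\mathcal Y$. In addition, if $H_L(\tilde Y;Y\mid\tilde X)$ is bounded, then $H_L(\tilde Y;Y\mid\tilde X)=H_L(Y\mid X)+O(\beta)$.
   Context: Neyman's $\chi^2$-divergence: $D_{\chi^2}(P\|Q)=\sum_z(P(z)-Q(z))^2/Q(z)$. For a loss $L:\mathcal Y\times\mathcal A\to\mathbb R$: $H_L(Y\mid X=x)=\min_{a\in\mathcal A}\mathbb E_{Y\sim P_{Y\mid X=x}}[L(Y,a)]$ with minimizer (Bayes action) $a_{P_{Y\mid X=x}}$, and $H_L(Y\mid X)=\sum_xP_X(x)H_L(Y\mid X=x)$, assumed bounded. The generalized conditional cross entropy is $H_L(\tilde Y;Y\mid\tilde X=x)=\mathbb E_{Y\sim P_{\tilde Y\mid\tilde X=x}}[L(Y,a_{P_{Y\mid X=x}})]$ and $H_L(\tilde Y;Y\mid\tilde X)=\sum_xP_{\tilde X}(x)H_L(\tilde Y;Y\mid\tilde X=x)$. $O(\beta)$ is as $\beta\to0$. *)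

theory Defs
  imports "HOL-Probability.Probability"
begin

definition chi2_div :: "'a::finite pmf \<Rightarrow> 'a pmf \<Rightarrow> ereal" where
  "chi2_div P Q = (\<Sum>z\<in>UNIV. if pmf Q z = 0 then (if pmf P z = 0 then 0 else \<infinity>)
      else ereal ((pmf P z - pmf Q z)^2 / pmf Q z))"

definition marg_X :: "('x \<times> 'y) pmf \<Rightarrow> 'x pmf" where
  "marg_X P = map_pmf fst P"

text \<open>Conditional probability P(Y=y | X=x); by the Isabelle convention it is 0 when P_X(x)=0.\<close>
definition condYX :: "('x \<times> 'y) pmf \<Rightarrow> 'x \<Rightarrow> 'y \<Rightarrow> real" where
  "condYX P x y = pmf P (x, y) / pmf (marg_X P) x"

definition cond_exp_loss :: "('y::finite \<Rightarrow> 'act \<Rightarrow> real) \<Rightarrow> ('x \<times> 'y) pmf \<Rightarrow> 'x \<Rightarrow> 'act \<Rightarrow> real" where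
  "cond_exp_loss L P x a = (\<Sum>y\<in>UNIV. condYX P x y * L y a)"

definition is_bayes_action :: "('y::finite \<Rightarrow> 'act \<Rightarrow> real) \<Rightarrow> ('x \<times> 'y) pmf \<Rightarrow> 'x \<Rightarrow> 'act \<Rightarrow> bool" where
  "is_bayes_action L P x a \<longleftrightarrow> (\<forall>b. cond_exp_loss L P x a \<le> cond_exp_loss L P x b)"

definition cond_entropy :: "('y::finite \<Rightarrow> 'act \<Rightarrow> real) \<Rightarrow> ('x::finite \<times> 'y) pmf \<Rightarrow> real" where
  "cond_entropy L P = (\<Sum>x\<in>UNIV. pmf (marg_X P) x * (INF a. cond_exp_loss L P x a))"

text \<open>Generalized conditional cross entropy H_L(Yt;Y|Xt), where a x is the Bayes action
  for P_{Y|X=x}.\<close>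
definition cond_cross_entropy ::
  "('y::finite \<Rightarrow> 'act \<Rightarrow> real) \<Rightarrow> ('x::finite \<times> 'y) pmf \<Rightarrow> ('x \<Rightarrow> 'act) \<Rightarrow> real" where
  "cond_cross_entropy L Pt a = (\<Sum>x\<in>UNIV. pmf (marg_X Pt) x * cond_exp_loss L Pt x (a x))"

end

theory Submission
  imports Defs
begin

text \<open>A single summand of the chi-square divergence is at most the whole sum, and
  (Q z - P z)^2 \<le> (Q z - P z)^2 / P z since P z \<le> 1. So a divergence of at most \<beta>^2 moves
  every point mass by at most \<beta> and puts no mass outside the support of P. Marginals are
  finite sums of point masses and move by O(\<beta>); a conditional is a ratio whose denominator
  P_X(x) > 0 stays above P_X(x)/2 for small \<beta>, so it moves by O(\<beta>) as well. Finally, with the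
  Bayes actions of P held fixed, H_L(Y|X) and the cross entropy are the same linear functional
  of P and of the perturbed joint pmf respectively, hence differ by O(\<beta>).\<close>

definition chi2_bigO :: "'a::finite pmf \<Rightarrow> ('a pmf \<Rightarrow> real) \<Rightarrow> bool" where
  "chi2_bigO P f \<longleftrightarrow> (\<exists>C \<delta>. \<delta> > 0 \<and> (\<forall>(\<beta>::real) Q.
      0 < \<beta> \<and> \<beta> < \<delta> \<and> chi2_div Q P \<le> ereal (\<beta>^2) \<longrightarrow> \<bar>f Q\<bar> \<le> C * \<beta>))"

lemma chi2_div_term_le:
  fixes P Q :: "'a::finite pmf"
  shows "(if pmf P z = 0 then (if pmf Q z = 0 then 0 else \<infinity>)
            else ereal ((pmf Q z - pmf P z)^2 / pmf P z)) \<le> chi2_div Q P"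
proof -
  define t where "t z = (if pmf P z = 0 then (if pmf Q z = 0 then 0 else \<infinity>)
      else ereal ((pmf Q z - pmf P z)^2 / pmf P z))" for z
  have "t z = sum t {z}" by simp
  also have "\<dots> \<le> sum t UNIV" by (rule sum_mono2) (auto simp: t_def)
  finally show ?thesis unfolding chi2_div_def t_def .
qed

lemma pmf_diff_sq_le_chi2_div:
  fixes P Q :: "'a::finite pmf"
  shows "ereal ((pmf Q z - pmf P z)^2) \<le> chi2_div Q P"
proof (cases "pmf P z = 0")
  case True
  then show ?thesis
    using chi2_div_term_le[of P z Q] by (auto split: if_splits simp flip: zero_ereal_def)
next
  case False
  then have "0 < pmf P z" by (simp add: order_less_le)
  then have "ereal ((pmf Q z - pmf P z)^2) \<le> ereal ((pmf Q z - pmf P z)^2 / pmf P z)"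
    using pmf_le_1[of P z] by (simp add: le_divide_eq mult_left_le)
  also have "\<dots> \<le> chi2_div Q P" using chi2_div_term_le[of P z Q] False by simp
  finally show ?thesis .
qed

lemma pmf_eq_0_if_chi2_div_finite:
  fixes P Q :: "'a::finite pmf"
  assumes "chi2_div Q P \<noteq> \<infinity>" and "pmf P z = 0"
  shows "pmf Q z = 0"
  using chi2_div_term_le[of P z Q] assms by (auto split: if_splits)

lemma pmf_dist_le_if_chi2_div_le:
  fixes P Q :: "'a::finite pmf"
  assumes "chi2_div Q P \<le> ereal (\<beta>^2)" and "0 \<le> \<beta>"
  shows "\<bar>pmf Q z - pmf P z\<bar> \<le> \<beta>"
proof -
  have "(pmf Q z - pmf P z)^2 \<le> \<beta>^2"
    using order_trans[OF pmf_diff_sq_le_chi2_div assms(1)] by simp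
  then show ?thesis using abs_le_square_iff[of "pmf Q z - pmf P z" \<beta>] assms(2) by simp
qed

lemma chi2_bigOI_pointwise:
  fixes P :: "'a::finite pmf"
  assumes "\<delta> > 0"
    and "\<And>\<epsilon> Q. 0 < \<epsilon> \<Longrightarrow> \<epsilon> < \<delta> \<Longrightarrow> (\<And>z. \<bar>pmf Q z - pmf P z\<bar> \<le> \<epsilon>) \<Longrightarrow>
           (\<And>z. pmf P z = 0 \<Longrightarrow> pmf Q z = 0) \<Longrightarrow> \<bar>f Q\<bar> \<le> C * \<epsilon>"
  shows "chi2_bigO P f"
proof -
  have "\<bar>f Q\<bar> \<le> C * \<beta>" if "0 < \<beta>" "\<beta> < \<delta>" "chi2_div Q P \<le> ereal (\<beta>^2)" for \<beta> Q
  proof (rule assms(2))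
    show "\<bar>pmf Q z - pmf P z\<bar> \<le> \<beta>" for z
      using that(1,3) by (intro pmf_dist_le_if_chi2_div_le) simp_all
    have "chi2_div Q P \<noteq> \<infinity>"
      using that(3) by (metis ereal_infty_less_eq(1) PInfty_neq_ereal(1))
    then show "pmf Q z = 0" if "pmf P z = 0" for z
      using that by (rule pmf_eq_0_if_chi2_div_finite)
  qed (use that in simp_all)
  then show ?thesis unfolding chi2_bigO_def using assms(1) by (intro exI[of _ C] exI[of _ \<delta>]) simp
qed

lemma pmf_marg_X: "pmf (marg_X Q) x = (\<Sum>y\<in>UNIV. pmf Q (x, y))"
  for Q :: "('x \<times> 'y::finite) pmf"
proof -
  have "pmf (marg_X Q) x = measure Q (fst -` {x})" unfolding marg_X_def by (simp add: pmf_map)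
  also have "fst -` {x} = Pair x ` (UNIV::'y set)" by auto
  also have "measure Q (Pair x ` UNIV) = (\<Sum>z\<in>Pair x ` UNIV. pmf Q z)"
    by (rule measure_measure_pmf_finite) simp
  also have "\<dots> = (\<Sum>y\<in>UNIV. pmf Q (x, y))" by (subst sum.reindex) (auto simp: inj_on_def)
  finally show ?thesis .
qed

lemma pmf_eq_0_if_marg_X_eq_0:
  assumes "pmf (marg_X Q) x = 0"
  shows "pmf Q (x, y) = 0"
  using assms unfolding marg_X_def by (force simp: pmf_eq_0_set_pmf)

lemma marg_X_dist_le:
  fixes P Q :: "('x \<times> 'y::finite) pmf" and \<epsilon> :: real
  assumes "\<And>z. \<bar>pmf Q z - pmf P z\<bar> \<le> \<epsilon>"
  shows "\<bar>pmf (marg_X Q) x - pmf (marg_X P) x\<bar> \<le> CARD('y) * \<epsilon>"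
proof -
  have "\<bar>pmf (marg_X Q) x - pmf (marg_X P) x\<bar> = \<bar>\<Sum>y\<in>UNIV. pmf Q (x, y) - pmf P (x, y)\<bar>"
    unfolding pmf_marg_X by (simp add: sum_subtractf)
  also have "\<dots> \<le> (\<Sum>y\<in>UNIV. \<bar>pmf Q (x, y) - pmf P (x, y)\<bar>)" by (rule sum_abs)
  also have "\<dots> \<le> (\<Sum>y\<in>(UNIV::'y set). \<epsilon>)" by (intro sum_mono assms)
  finally show ?thesis by simp
qed

lemma chi2_bigO_marg_X:
  fixes P :: "('x::finite \<times> 'y::finite) pmf"
  shows "chi2_bigO P (\<lambda>Q. pmf (marg_X Q) x - pmf (marg_X P) x)"
  by (rule chi2_bigOI_pointwise[where \<delta> = 1 and C = "CARD('y)"]) (auto intro: marg_X_dist_le)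

lemma condYX_dist_le:
  fixes P Q :: "('x \<times> 'y::finite) pmf" and x :: 'x and \<epsilon> p :: real
  defines "p \<equiv> pmf (marg_X P) x"
  assumes "p > 0"
    and pointwise: "\<And>z. \<bar>pmf Q z - pmf P z\<bar> \<le> \<epsilon>"
    and small: "CARD('y) * \<epsilon> \<le> p / 2"
  shows "\<bar>condYX Q x y - condYX P x y\<bar> \<le> 2 * (p + CARD('y)) / p^2 * \<epsilon>"
proof -
  define q u v where "q = pmf (marg_X Q) x" and "u = pmf Q (x, y)" and "v = pmf P (x, y)"
  have "\<bar>q - p\<bar> \<le> CARD('y) * \<epsilon>" unfolding p_def q_def by (rule marg_X_dist_le[OF pointwise])
  then have "q \<ge> p / 2" using small by linarith
  then have q: "q > 0" and denominator: "q * p \<ge> p^2 / 2"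
    using \<open>p > 0\<close> by (auto simp: power2_eq_square)
  have "\<bar>(u - v) * p + v * (p - q)\<bar> \<le> \<bar>u - v\<bar> * p + v * \<bar>p - q\<bar>"
    using \<open>p > 0\<close> abs_triangle_ineq[of "(u - v) * p" "v * (p - q)"] by (simp add: abs_mult v_def)
  also have "\<dots> \<le> \<epsilon> * p + 1 * (CARD('y) * \<epsilon>)"
    using pointwise[of "(x, y)"] \<open>\<bar>q - p\<bar> \<le> _\<close> \<open>p > 0\<close> pmf_le_1[of P "(x, y)"]
    by (intro add_mono mult_mono) (auto simp: u_def v_def abs_minus_commute)
  finally have numerator: "\<bar>(u - v) * p + v * (p - q)\<bar> \<le> (p + CARD('y)) * \<epsilon>"
    by (simp add: algebra_simps)
  have "\<bar>condYX Q x y - condYX P x y\<bar> = \<bar>u / q - v / p\<bar>"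
    unfolding condYX_def u_def v_def q_def p_def ..
  also have "\<dots> = \<bar>(u - v) * p + v * (p - q)\<bar> / (q * p)"
    using \<open>p > 0\<close> q by (simp add: field_simps)
  also have "\<dots> \<le> (p + CARD('y)) * \<epsilon> / (p^2 / 2)"
    using numerator denominator \<open>p > 0\<close> by (intro frac_le) auto
  also have "\<dots> = 2 * (p + CARD('y)) / p^2 * \<epsilon>" by (simp add: field_simps)
  finally show ?thesis .
qed

lemma chi2_bigO_condYX:
  fixes P :: "('x::finite \<times> 'y::finite) pmf"
  shows "chi2_bigO P (\<lambda>Q. condYX Q x y - condYX P x y)"
proof (cases "pmf (marg_X P) x = 0")
  case True
  show ?thesis
  proof (rule chi2_bigOI_pointwise[where \<delta> = 1 and C = 0])
    fix \<epsilon> and Q :: "('x \<times> 'y) pmf"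
    assume "\<And>z. pmf P z = 0 \<Longrightarrow> pmf Q z = 0"
    then have "pmf Q (x, y) = 0" using pmf_eq_0_if_marg_X_eq_0[OF True] by blast
    then show "\<bar>condYX Q x y - condYX P x y\<bar> \<le> 0 * \<epsilon>" using True by (simp add: condYX_def)
  qed simp
next
  case False
  define p where "p = pmf (marg_X P) x"
  have "p > 0" using False unfolding p_def by (simp add: order_less_le)
  show ?thesis
  proof (rule chi2_bigOI_pointwise[where \<delta> = "p / (2 * real CARD('y))"])
    fix \<epsilon> and Q :: "('x \<times> 'y) pmf"
    assume "\<epsilon> < p / (2 * real CARD('y))" and pointwise: "\<And>z. \<bar>pmf Q z - pmf P z\<bar> \<le> \<epsilon>"
    then have "CARD('y) * \<epsilon> \<le> p / 2" by (simp add: field_simps)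
    with \<open>p > 0\<close> pointwise
    show "\<bar>condYX Q x y - condYX P x y\<bar> \<le> 2 * (p + CARD('y)) / p^2 * \<epsilon>"
      unfolding p_def by (rule condYX_dist_le)
  qed (use \<open>p > 0\<close> in simp)
qed

lemma marg_X_mult_cond_exp_loss:
  fixes Q :: "('x \<times> 'y::finite) pmf"
  shows "pmf (marg_X Q) x * cond_exp_loss L Q x b = (\<Sum>y\<in>UNIV. pmf Q (x, y) * L y b)"
proof (cases "pmf (marg_X Q) x = 0")
  case True
  then show ?thesis by (simp add: pmf_eq_0_if_marg_X_eq_0)
next
  case False
  then show ?thesis unfolding cond_exp_loss_def condYX_def sum_distrib_left
    by (intro sum.cong) auto
qed

lemma cond_entropy_eq_cond_cross_entropy:
  assumes "\<forall>x. pmf (marg_X P) x > 0 \<longrightarrow> is_bayes_action L P x (a x)"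
  shows "cond_entropy L P = cond_cross_entropy L P a"
  unfolding cond_entropy_def cond_cross_entropy_def
proof (intro sum.cong refl)
  fix x
  show "pmf (marg_X P) x * (INF b. cond_exp_loss L P x b)
      = pmf (marg_X P) x * cond_exp_loss L P x (a x)"
  proof (cases "pmf (marg_X P) x > 0")
    case True
    then have "(INF b. cond_exp_loss L P x b) = cond_exp_loss L P x (a x)"
      using assms unfolding is_bayes_action_def by (intro cInf_eq_minimum) auto
    then show ?thesis by simp
  qed (simp add: order_less_le)
qed

lemma cond_cross_entropy_dist_le:
  fixes P Q :: "('x::finite \<times> 'y::finite) pmf"
  assumes "\<And>z. \<bar>pmf Q z - pmf P z\<bar> \<le> \<epsilon>"
  shows "\<bar>cond_cross_entropy L Q a - cond_cross_entropy L P a\<bar>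
           \<le> (\<Sum>x\<in>UNIV. \<Sum>y\<in>UNIV. \<bar>L y (a x)\<bar>) * \<epsilon>"
proof -
  have "\<bar>cond_cross_entropy L Q a - cond_cross_entropy L P a\<bar>
      = \<bar>\<Sum>x\<in>UNIV. \<Sum>y\<in>UNIV. (pmf Q (x, y) - pmf P (x, y)) * L y (a x)\<bar>"
    unfolding cond_cross_entropy_def marg_X_mult_cond_exp_loss
    by (simp add: sum_subtractf left_diff_distrib)
  also have "\<dots> \<le> (\<Sum>x\<in>UNIV. \<Sum>y\<in>UNIV. \<bar>pmf Q (x, y) - pmf P (x, y)\<bar> * \<bar>L y (a x)\<bar>)"
    unfolding abs_mult[symmetric] by (rule order_trans[OF sum_abs]) (intro sum_mono sum_abs)
  also have "\<dots> \<le> (\<Sum>x\<in>UNIV. \<Sum>y\<in>UNIV. \<epsilon> * \<bar>L y (a x)\<bar>)"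
    by (intro sum_mono mult_right_mono assms) simp
  finally show ?thesis by (simp add: sum_distrib_left mult.commute)
qed

lemma chi2_bigO_cond_cross_entropy:
  fixes P :: "('x::finite \<times> 'y::finite) pmf"
  shows "chi2_bigO P (\<lambda>Q. cond_cross_entropy L Q a - cond_cross_entropy L P a)"
  by (rule chi2_bigOI_pointwise[where \<delta> = 1 and C = "\<Sum>x\<in>UNIV. \<Sum>y\<in>UNIV. \<bar>L y (a x)\<bar>"])
    (auto intro: cond_cross_entropy_dist_le)

theorem lemma2:
  fixes P :: "('x::finite \<times> 'y::finite) pmf"
    and L :: "'y \<Rightarrow> 'act \<Rightarrow> real"
    and a :: "'x \<Rightarrow> 'act"
  assumes bayes: "\<forall>x. pmf (marg_X P) x > 0 \<longrightarrow> is_bayes_action L P x (a x)"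
  shows "(\<forall>x. \<exists>C \<delta>. \<delta> > 0 \<and> (\<forall>(\<beta>::real) (Pt::('x \<times> 'y) pmf).
            0 < \<beta> \<and> \<beta> < \<delta> \<and> chi2_div Pt P \<le> ereal (\<beta>^2) \<longrightarrow>
            \<bar>pmf (marg_X Pt) x - pmf (marg_X P) x\<bar> \<le> C * \<beta>))
       \<and> (\<forall>x y. \<exists>C \<delta>. \<delta> > 0 \<and> (\<forall>(\<beta>::real) (Pt::('x \<times> 'y) pmf).
            0 < \<beta> \<and> \<beta> < \<delta> \<and> chi2_div Pt P \<le> ereal (\<beta>^2) \<longrightarrow>
            \<bar>condYX Pt x y - condYX P x y\<bar> \<le> C * \<beta>))
       \<and> (\<exists>C \<delta>. \<delta> > 0 \<and> (\<forall>(\<beta>::real) (Pt::('x \<times> 'y) pmf).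
            0 < \<beta> \<and> \<beta> < \<delta> \<and> chi2_div Pt P \<le> ereal (\<beta>^2) \<longrightarrow>
            \<bar>cond_cross_entropy L Pt a - cond_entropy L P\<bar> \<le> C * \<beta>))"
  using chi2_bigO_marg_X[of P] chi2_bigO_condYX[of P]
    chi2_bigO_cond_cross_entropy[of P L a, folded cond_entropy_eq_cond_cross_entropy[OF bayes]]
  unfolding chi2_bigO_def by (intro conjI allI) assumption+

end
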